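(* Let $Y$ be a non-negative integer-valued random variable with finite second moment. For $t\ge 0$ let $m_Y(t)=\mathbb{E}[Y-t\mid Y>t]$ (defined when $\mathbb{P}(Y>t)>0$). If \[ m_Y(t)\ge \mathbb{E}[Y]+\tfrac12\quad\text{for all } t\ge 0, \] then $\sqrt{\tfrac12\mathbb{E}[Y^2]}\ge\mathbb{E}[Y]$. Likewise, if $m_Y(t)\le\mathbb{E}[Y]+\tfrac12$ for all $t\ge0$, then $\sqrt{\tfrac12\mathbb{E}[Y^2]}\le\mathbb{E}[Y]$.
   Context: In the discrete setting the mean excess function is the genuine conditional expectation, so $m_Y(0)=\mathbb{E}[Y\mid Y>0]\ge\mathbb{E}[Y]$. *)

theory Defs
  imports "HOL-Probability.Probability"
begin

text \<open>Mean excess function of a nat-valued random variable Y on the measure space M: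
  m_Y(t) = E[Y - t | Y > t] = E[(Y - t) 1{Y > t}] / P(Y > t).
  Only meaningful when P(Y > t) > 0.\<close>
definition mean_excess :: "'a measure \<Rightarrow> ('a \<Rightarrow> nat) \<Rightarrow> real \<Rightarrow> real" where
  "mean_excess M Y t =
     (\<integral>x. (real (Y x) - t) * indicator {x \<in> space M. real (Y x) > t} x \<partial>M)
       / measure M {x \<in> space M. real (Y x) > t}"

end

theory Submission
  imports Defs
begin

(* For a nat-valued Y, both E[Y] and E[Y(Y+1)/2] are sums over t of tail quantities:
   E[Y] = \<Sum>t P(Y > t) and E[Y(Y+1)/2] = \<Sum>t E[(Y - t) 1{Y > t}], and the t-th term of
   the second series is m_Y(t) P(Y > t).  Bounding m_Y(t) by E[Y] + 1/2 termwise and summing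
   gives (E[Y^2] + E[Y]) / 2 \<ge> (E[Y] + 1/2) E[Y], i.e. E[Y^2] / 2 \<ge> E[Y]^2, and likewise
   for the reverse inequality. *)

definition stop_loss :: "'a measure \<Rightarrow> ('a \<Rightarrow> nat) \<Rightarrow> real \<Rightarrow> real" where
  "stop_loss M Y t = (\<integral>x. (real (Y x) - t) * indicator {x \<in> space M. real (Y x) > t} x \<partial>M)"

lemma sums_integral_nonneg:
  fixes f :: "nat \<Rightarrow> 'a \<Rightarrow> real"
  assumes f_int: "\<And>i. integrable M (f i)" and f_nonneg: "\<And>i x. 0 \<le> f i x"
    and f_sums: "\<And>x. x \<in> space M \<Longrightarrow> (\<lambda>i. f i x) sums g x"
    and g_int: "integrable M g"
  shows "(\<lambda>i. integral\<^sup>L M (f i)) sums integral\<^sup>L M g"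
proof -
  have g_nonneg: "0 \<le> g x" if "x \<in> space M" for x
    using sums_le[OF _ sums_zero f_sums[OF that]] f_nonneg by blast
  have "ennreal (integral\<^sup>L M g) = (\<integral>\<^sup>+x. ennreal (g x) \<partial>M)"
    using g_int g_nonneg by (simp add: nn_integral_eq_integral)
  also have "\<dots> = (\<integral>\<^sup>+x. (\<Sum>i. ennreal (f i x)) \<partial>M)"
  proof (rule nn_integral_cong)
    fix x assume x: "x \<in> space M"
    have "(\<lambda>i. ennreal (f i x)) sums ennreal (g x)"
      using f_sums[OF x] f_nonneg g_nonneg[OF x] by simp
    then show "ennreal (g x) = (\<Sum>i. ennreal (f i x))"
      by (simp add: sums_iff)
  qed
  also have "\<dots> = (\<Sum>i. \<integral>\<^sup>+x. ennreal (f i x) \<partial>M)"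
    using f_int by (intro nn_integral_suminf) auto
  also have "\<dots> = (\<Sum>i. ennreal (integral\<^sup>L M (f i)))"
    using f_int f_nonneg by (simp add: nn_integral_eq_integral)
  finally have "(\<lambda>i. ennreal (integral\<^sup>L M (f i))) sums ennreal (integral\<^sup>L M g)"
    by (metis summable_sums summableI)
  then show ?thesis
    using f_nonneg g_nonneg by (subst (asm) sums_ennreal) (auto intro: integral_nonneg_AE)
qed

lemma sum_lessThan_diff: "(\<Sum>t<n. real n - real t) = (real n ^ 2 + real n) / 2"
  by (induction n) (simp_all add: sum_subtractf power2_eq_square field_simps)

lemma tail_measures_sums_integral:
  fixes Y :: "'a \<Rightarrow> nat"
  assumes Y_meas: "Y \<in> M \<rightarrow>\<^sub>M count_space UNIV"
    and Y_int: "integrable M (\<lambda>x. real (Y x))"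
  shows "(\<lambda>t. measure M {x \<in> space M. t < Y x}) sums (\<integral>x. real (Y x) \<partial>M)"
proof -
  let ?S = "\<lambda>t. {x \<in> space M. t < Y x}"
  have S_sets: "?S t \<in> sets M" for t
    using Y_meas by measurable
  have "integrable M (indicator (?S t) :: 'a \<Rightarrow> real)" for t
    by (rule Bochner_Integration.integrable_bound[OF Y_int])
      (use S_sets in \<open>auto simp: indicator_def\<close>)
  moreover have "(\<lambda>t. indicator (?S t) x :: real) sums real (Y x)" if "x \<in> space M" for x
  proof -
    have "(\<lambda>t. indicator (?S t) x :: real) sums (\<Sum>t<Y x. indicator (?S t) x)"
      by (rule sums_finite) (auto simp: indicator_def)
    then show ?thesis
      using that by (simp add: indicator_def)
  qed
  ultimately have "(\<lambda>t. integral\<^sup>L M (indicator (?S t))) sums (\<integral>x. real (Y x) \<partial>M)"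
    by (intro sums_integral_nonneg Y_int) auto
  moreover have "?S t \<inter> space M = ?S t" for t
    by auto
  ultimately show ?thesis
    by simp
qed

lemma stop_loss_sums:
  fixes Y :: "'a \<Rightarrow> nat"
  assumes Y_meas: "Y \<in> M \<rightarrow>\<^sub>M count_space UNIV"
    and Y_int: "integrable M (\<lambda>x. real (Y x))"
    and Y2_int: "integrable M (\<lambda>x. (real (Y x))\<^sup>2)"
  shows "(\<lambda>t. stop_loss M Y (real t))
           sums (((\<integral>x. (real (Y x))\<^sup>2 \<partial>M) + (\<integral>x. real (Y x) \<partial>M)) / 2)"
proof -
  define g where "g t x = (real (Y x) - real t) * indicator {x \<in> space M. real (Y x) > real t} x"
    for t x
  have G_int: "integrable M (\<lambda>x. ((real (Y x))\<^sup>2 + real (Y x)) / 2)"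
    using Y_int Y2_int by auto
  have "integrable M (g t)" for t
    using Bochner_Integration.integrable_add[OF Y2_int Y_int]
  proof (rule Bochner_Integration.integrable_bound)
    show "g t \<in> borel_measurable M"
      unfolding g_def using Y_meas by measurable
    show "AE x in M. norm (g t x) \<le> norm ((real (Y x))\<^sup>2 + real (Y x))"
      by (intro AE_I2) (auto simp: g_def indicator_def intro: order.trans[OF _ zero_le_power2])
  qed
  moreover have "(\<lambda>t. g t x) sums (((real (Y x))\<^sup>2 + real (Y x)) / 2)" if "x \<in> space M" for x
  proof -
    have "(\<lambda>t. g t x) sums (\<Sum>t<Y x. g t x)"
      by (rule sums_finite) (auto simp: g_def)
    also have "(\<Sum>t<Y x. g t x) = (\<Sum>t<Y x. real (Y x) - real t)"
      using that by (intro sum.cong) (auto simp: g_def)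
    finally show ?thesis
      by (simp add: sum_lessThan_diff)
  qed
  ultimately have "(\<lambda>t. integral\<^sup>L M (g t)) sums (\<integral>x. ((real (Y x))\<^sup>2 + real (Y x)) / 2 \<partial>M)"
    by (intro sums_integral_nonneg G_int) (auto simp: g_def indicator_def)
  then show ?thesis
    using Y_int Y2_int by (simp add: stop_loss_def g_def[abs_def])
qed

(* Also when P(Y > t) = 0, where mean_excess is 0 by the convention x / 0 = 0. *)
lemma stop_loss_eq_mean_excess_mult:
  assumes "finite_measure M" and Y_meas: "Y \<in> M \<rightarrow>\<^sub>M count_space UNIV"
  shows "stop_loss M Y t = mean_excess M Y t * measure M {x \<in> space M. real (Y x) > t}"
proof (cases "measure M {x \<in> space M. real (Y x) > t} = 0")
  case True
  let ?S = "{x \<in> space M. real (Y x) > t}"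
  interpret finite_measure M by fact
  have "?S \<in> null_sets M"
    using True Y_meas by (simp add: null_sets_def emeasure_eq_measure)
  then have "AE x in M. (real (Y x) - t) * indicator ?S x = 0"
    by (rule AE_mp[OF AE_not_in]) auto
  then have "stop_loss M Y t = (\<integral>x. 0 \<partial>M)"
    unfolding stop_loss_def by (rule integral_cong_AE[rotated 2]) (use Y_meas in measurable)
  with True show ?thesis
    by simp
next
  case False
  then show ?thesis
    by (simp add: mean_excess_def stop_loss_def)
qed

lemma mean_excess_mult_tail_sums:
  fixes Y :: "'a \<Rightarrow> nat"
  assumes "finite_measure M" and Y_meas: "Y \<in> M \<rightarrow>\<^sub>M count_space UNIV"
    and Y_int: "integrable M (\<lambda>x. real (Y x))"
    and Y2_int: "integrable M (\<lambda>x. (real (Y x))\<^sup>2)"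
  shows "(\<lambda>t. mean_excess M Y (real t) * measure M {x \<in> space M. t < Y x})
           sums (((\<integral>x. (real (Y x))\<^sup>2 \<partial>M) + (\<integral>x. real (Y x) \<partial>M)) / 2)"
  using stop_loss_sums[OF Y_meas Y_int Y2_int]
  by (simp add: stop_loss_eq_mean_excess_mult[OF assms(1,2)])

lemma weighted_sums_lower_bound:
  fixes m p :: "nat \<Rightarrow> real"
  assumes "p sums P" and "(\<lambda>t. m t * p t) sums S"
    and "\<And>t. 0 \<le> p t" and "\<And>t. p t > 0 \<Longrightarrow> c \<le> m t"
  shows "c * P \<le> S"
proof -
  have "c * p t \<le> m t * p t" for t
    using assms(3,4)[of t] by (cases "p t = 0") (auto intro: mult_right_mono)
  then show ?thesis
    using sums_le[OF _ sums_mult[OF assms(1)] assms(2)] by blast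
qed

lemma weighted_sums_upper_bound:
  fixes m p :: "nat \<Rightarrow> real"
  assumes "p sums P" and "(\<lambda>t. m t * p t) sums S"
    and "\<And>t. 0 \<le> p t" and "\<And>t. p t > 0 \<Longrightarrow> m t \<le> c"
  shows "S \<le> c * P"
proof -
  have "m t * p t \<le> c * p t" for t
    using assms(3,4)[of t] by (cases "p t = 0") (auto intro: mult_right_mono)
  then show ?thesis
    using sums_le[OF _ assms(2) sums_mult[OF assms(1)]] by blast
qed

theorem proposition10:
  fixes M :: "'a measure" and Y :: "'a \<Rightarrow> nat"
  assumes "prob_space M"
    and "Y \<in> M \<rightarrow>\<^sub>M count_space UNIV"
    and "integrable M (\<lambda>x. (real (Y x))\<^sup>2)"
  shows "((\<forall>t::nat. measure M {x \<in> space M. Y x > t} > 0 \<longrightarrow>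
              mean_excess M Y (real t) \<ge> (\<integral>x. real (Y x) \<partial>M) + 1/2)
           \<longrightarrow> sqrt ((\<integral>x. (real (Y x))\<^sup>2 \<partial>M) / 2) \<ge> (\<integral>x. real (Y x) \<partial>M))
       \<and> ((\<forall>t::nat. measure M {x \<in> space M. Y x > t} > 0 \<longrightarrow>
              mean_excess M Y (real t) \<le> (\<integral>x. real (Y x) \<partial>M) + 1/2)
           \<longrightarrow> sqrt ((\<integral>x. (real (Y x))\<^sup>2 \<partial>M) / 2) \<le> (\<integral>x. real (Y x) \<partial>M))"
proof -
  interpret prob_space M by fact
  define \<mu> where "\<mu> = (\<integral>x. real (Y x) \<partial>M)"
  define Q where "Q = (\<integral>x. (real (Y x))\<^sup>2 \<partial>M)"
  have Y_int: "integrable M (\<lambda>x. real (Y x))"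
    by (rule square_integrable_imp_integrable[OF _ assms(3)]) (use assms(2) in measurable)
  note tail_sums = tail_measures_sums_integral[OF assms(2) Y_int, folded \<mu>_def]
  note excess_sums = mean_excess_mult_tail_sums[OF finite_measure_axioms assms(2) Y_int assms(3),
      folded \<mu>_def Q_def]
  have "\<mu> \<le> sqrt (Q / 2)"
    if "\<forall>t. measure M {x \<in> space M. Y x > t} > 0 \<longrightarrow> mean_excess M Y (real t) \<ge> \<mu> + 1/2"
  proof -
    have "(\<mu> + 1/2) * \<mu> \<le> (Q + \<mu>) / 2"
      using that by (intro weighted_sums_lower_bound[OF tail_sums excess_sums]) auto
    then show ?thesis
      by (intro real_le_rsqrt) (simp add: power2_eq_square algebra_simps)
  qed
  moreover have "sqrt (Q / 2) \<le> \<mu>"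
    if "\<forall>t. measure M {x \<in> space M. Y x > t} > 0 \<longrightarrow> mean_excess M Y (real t) \<le> \<mu> + 1/2"
  proof -
    have "(Q + \<mu>) / 2 \<le> (\<mu> + 1/2) * \<mu>"
      using that by (intro weighted_sums_upper_bound[OF tail_sums excess_sums]) auto
    then have "sqrt (Q / 2) \<le> sqrt (\<mu>\<^sup>2)"
      by (intro real_sqrt_le_mono) (simp add: power2_eq_square algebra_simps)
    moreover have "0 \<le> \<mu>"
      unfolding \<mu>_def by (rule integral_nonneg_AE) auto
    ultimately show ?thesis
      by simp
  qed
  ultimately show ?thesis
    unfolding \<mu>_def Q_def by blast
qed

end
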